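(* For every $n\ge1$, the variety $\mathsf{PMV}_n=\mathbb{HSP}(\mathbf{P\L}_n)$ generated by $\mathbf{P\L}_n$ coincides with the quasi-variety $\mathbb{ISP}(\mathbf{P\L}_n)$ generated by $\mathbf{P\L}_n$. In other words, every member of $\mathsf{PMV}_n$ is isomorphic to a subalgebra of a (possibly empty) direct power of $\mathbf{P\L}_n$.
   Context: For $n\ge 1$, the algebra $\mathbf{P\L}_n=\langle\{0,\tfrac1n,\dots,\tfrac{n-1}{n},1\},\wedge,\vee,\odot,\oplus,0,1\rangle$ has $\wedge=\min$, $\vee=\max$, $x\odot y=\max\{0,x+y-1\}$ and $x\oplus y=\min\{1,x+y\}$. The variety it generates is denoted $\mathsf{PMV}_n$. *)

theory Defs
  imports Complex_Main "HOL-Library.FuncSet"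
begin

text \<open>Algebras in the signature (meet, join, strong conjunction, strong disjunction, 0, 1).
  The operations are total functions on the ambient type; only their behaviour on the
  carrier matters.\<close>
record 'a pmv_alg =
  pcar  :: "'a set"
  pmeet :: "'a \<Rightarrow> 'a \<Rightarrow> 'a"
  pjoin :: "'a \<Rightarrow> 'a \<Rightarrow> 'a"
  pmul  :: "'a \<Rightarrow> 'a \<Rightarrow> 'a"
  padd  :: "'a \<Rightarrow> 'a \<Rightarrow> 'a"
  pzero :: "'a"
  pone  :: "'a"

definition Ln :: "nat \<Rightarrow> real set" where
  "Ln n = {real k / real n | k. k \<le> n}"

definition PL :: "nat \<Rightarrow> real pmv_alg" where
  "PL n = \<lparr> pcar = Ln n, pmeet = min, pjoin = max,
            pmul = (\<lambda>x y. max 0 (x + y - 1)), padd = (\<lambda>x y. min 1 (x + y)),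
            pzero = 0, pone = 1 \<rparr>"

definition power_alg :: "'a pmv_alg \<Rightarrow> 'i set \<Rightarrow> ('i \<Rightarrow> 'a) pmv_alg" where
  "power_alg A I = \<lparr> pcar = I \<rightarrow>\<^sub>E pcar A,
      pmeet = (\<lambda>f g. restrict (\<lambda>i. pmeet A (f i) (g i)) I),
      pjoin = (\<lambda>f g. restrict (\<lambda>i. pjoin A (f i) (g i)) I),
      pmul  = (\<lambda>f g. restrict (\<lambda>i. pmul A (f i) (g i)) I),
      padd  = (\<lambda>f g. restrict (\<lambda>i. padd A (f i) (g i)) I),
      pzero = restrict (\<lambda>i. pzero A) I,
      pone  = restrict (\<lambda>i. pone A) I \<rparr>"

definition subuniverse :: "'a set \<Rightarrow> 'a pmv_alg \<Rightarrow> bool" where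
  "subuniverse B A \<longleftrightarrow> B \<subseteq> pcar A \<and> pzero A \<in> B \<and> pone A \<in> B \<and>
     (\<forall>x\<in>B. \<forall>y\<in>B. pmeet A x y \<in> B \<and> pjoin A x y \<in> B \<and> pmul A x y \<in> B \<and> padd A x y \<in> B)"

definition subalg :: "'a pmv_alg \<Rightarrow> 'a set \<Rightarrow> 'a pmv_alg" where
  "subalg A B = A\<lparr>pcar := B\<rparr>"

definition is_hom :: "'a pmv_alg \<Rightarrow> 'b pmv_alg \<Rightarrow> ('a \<Rightarrow> 'b) \<Rightarrow> bool" where
  "is_hom A C h \<longleftrightarrow> (\<forall>x\<in>pcar A. h x \<in> pcar C) \<and>
     h (pzero A) = pzero C \<and> h (pone A) = pone C \<and>
     (\<forall>x\<in>pcar A. \<forall>y\<in>pcar A.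
        h (pmeet A x y) = pmeet C (h x) (h y) \<and> h (pjoin A x y) = pjoin C (h x) (h y) \<and>
        h (pmul A x y) = pmul C (h x) (h y) \<and> h (padd A x y) = padd C (h x) (h y))"

text \<open>Witness that A lies in HSP(PL_n): A is the image of a surjective homomorphism h
  from the subalgebra with universe B of the direct power PL_n^I.\<close>
definition HSP_witness :: "nat \<Rightarrow> 'i set \<Rightarrow> ('i \<Rightarrow> real) set \<Rightarrow> (('i \<Rightarrow> real) \<Rightarrow> 'a)
                            \<Rightarrow> 'a pmv_alg \<Rightarrow> bool" where
  "HSP_witness n I B h A \<longleftrightarrow> subuniverse B (power_alg (PL n) I) \<and>
     is_hom (subalg (power_alg (PL n) I) B) A h \<and> h ` B = pcar A"

text \<open>A lies in ISP(PL_n): A embeds (injective homomorphism) into a direct power of PL_n.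
  The index set is taken in the type ('a => real) set, which suffices (e.g. the set of
  homomorphisms A -> PL_n).\<close>
definition in_ISP_PL :: "nat \<Rightarrow> 'a pmv_alg \<Rightarrow> bool" where
  "in_ISP_PL n A \<longleftrightarrow> (\<exists>(J :: ('a \<Rightarrow> real) set) e.
      is_hom A (power_alg (PL n) J) e \<and> inj_on e (pcar A))"

end

theory Submission
  imports Defs
begin

text \<open>It suffices that homomorphisms \<open>A \<rightarrow> PL_n\<close> separate the points of \<open>A = h(B)\<close>,
  \<open>B \<le> PL_n^I\<close>. On the grid \<open>{0, 1/n, ..., 1}\<close> each threshold map \<open>x \<mapsto> [x \<ge> k/n]\<close> is a
  unary term built from \<open>x \<oplus> x\<close> and \<open>x \<odot> x\<close>, so thresholds commute with \<open>h\<close>; conversely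
  \<open>h b = h c\<close> once all thresholds of \<open>b\<close> and \<open>c\<close> have equal images. Two thresholds with
  different images are separated (Zorn) by a prime lattice filter of \<open>B\<close> saturated for the
  kernel of \<open>h\<close>, and counting the thresholds of \<open>b\<close> lying in such a filter is a
  homomorphism \<open>A \<rightarrow> PL_n\<close>.\<close>

datatype uterm = Var | Dbl uterm | Sqr uterm

fun real_eval :: "uterm \<Rightarrow> real \<Rightarrow> real" where
  "real_eval Var x = x"
| "real_eval (Dbl t) x = real_eval t (min 1 (x + x))"
| "real_eval (Sqr t) x = real_eval t (max 0 (x + x - 1))"

fun alg_eval :: "'a pmv_alg \<Rightarrow> uterm \<Rightarrow> 'a \<Rightarrow> 'a" where
  "alg_eval A Var x = x"
| "alg_eval A (Dbl t) x = alg_eval A t (padd A x x)"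
| "alg_eval A (Sqr t) x = alg_eval A t (pmul A x x)"

lemma uterm_vanishing_below:
  fixes c :: real
  assumes "1 \<le> 2 ^ j * (1 - c)"
  shows "\<exists>t. (\<forall>x. 0 \<le> x \<and> x \<le> c \<longrightarrow> real_eval t x = 0) \<and> real_eval t 1 = 1"
  using assms
proof (induction j arbitrary: c)
  case 0
  then show ?case by (intro exI[of _ Var]) auto
next
  case (Suc j)
  define c' where "c' = max 0 (2 * c - 1)"
  have "1 \<le> 2 ^ j * (1 - c')"
    using Suc.prems by (auto simp: c'_def max_def algebra_simps)
  then obtain t where t: "\<forall>x. 0 \<le> x \<and> x \<le> c' \<longrightarrow> real_eval t x = 0" "real_eval t 1 = 1"
    using Suc.IH by blast
  have "real_eval (Sqr t) x = 0" if "0 \<le> x" "x \<le> c" for x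
    using t(1) that by (simp add: c'_def)
  moreover have "real_eval (Sqr t) 1 = 1" using t(2) by simp
  ultimately show ?case by blast
qed

text \<open>Doubling stretches the lower half of [0,1] onto [0,1], squaring the upper half; after
  N steps any gap of length \<open>2 ^ -N\<close> has been stretched to a jump from 0 to 1.\<close>
lemma uterm_step:
  fixes a b :: real
  assumes "0 \<le> b" "b < a" "a \<le> 1" "1 \<le> 2 ^ N * (a - b)"
  shows "\<exists>t. \<forall>x. 0 \<le> x \<and> x \<le> 1 \<longrightarrow>
           (x \<le> b \<longrightarrow> real_eval t x = 0) \<and> (a \<le> x \<longrightarrow> real_eval t x = 1)"
  using assms
proof (induction N arbitrary: a b)
  case 0
  then have "b = 0" "a = 1" by auto
  then show ?case by (intro exI[of _ Var]) auto
next
  case (Suc N)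
  consider "a \<le> 1/2" | "1/2 \<le> b" | "b < 1/2" "1/2 < a" by linarith
  then show ?case
  proof cases
    case 1
    obtain t where t: "\<forall>x. 0 \<le> x \<and> x \<le> 1 \<longrightarrow>
        (x \<le> 2*b \<longrightarrow> real_eval t x = 0) \<and> (2*a \<le> x \<longrightarrow> real_eval t x = 1)"
      using Suc.IH[of "2*b" "2*a"] Suc.prems 1 by (auto simp: algebra_simps)
    show ?thesis
      by (rule exI[of _ "Dbl t"]) (use t 1 Suc.prems in auto)
  next
    case 2
    obtain t where t: "\<forall>x. 0 \<le> x \<and> x \<le> 1 \<longrightarrow>
        (x \<le> 2*b-1 \<longrightarrow> real_eval t x = 0) \<and> (2*a-1 \<le> x \<longrightarrow> real_eval t x = 1)"
      using Suc.IH[of "2*b-1" "2*a-1"] Suc.prems 2 by (auto simp: algebra_simps)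
    show ?thesis
      by (rule exI[of _ "Sqr t"]) (use t 2 Suc.prems in auto)
  next
    case 3
    obtain j where "1 / (1 - 2*b) < 2 ^ j"
      using real_arch_pow[of "2::real"] by auto
    then have "1 \<le> 2 ^ j * (1 - 2*b)" using 3 by (simp add: field_simps)
    then obtain t where t: "\<forall>x. 0 \<le> x \<and> x \<le> 2*b \<longrightarrow> real_eval t x = 0" "real_eval t 1 = 1"
      using uterm_vanishing_below by blast
    show ?thesis
      by (rule exI[of _ "Dbl t"]) (use t 3 in auto)
  qed
qed

lemma uterm_grid_threshold:
  assumes "1 \<le> k" "k \<le> n"
  shows "\<exists>t. \<forall>q\<le>n. real_eval t (real q / real n) = (if k \<le> q then 1 else 0)"
proof -
  have "real n < 2 ^ n" by (metis of_nat_less_numeral_power_cancel_iff less_exp)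
  then have "1 \<le> 2 ^ n * (real k / n - real (k - 1) / n)"
    using assms by (simp add: field_simps of_nat_diff)
  then obtain t where t: "\<forall>x. 0 \<le> x \<and> x \<le> 1 \<longrightarrow>
      (x \<le> real (k - 1) / n \<longrightarrow> real_eval t x = 0) \<and> (real k / n \<le> x \<longrightarrow> real_eval t x = 1)"
    using uterm_step[of "real (k - 1) / n" "real k / n" n] assms
    by (auto simp: field_simps of_nat_diff)
  have "real_eval t (real q / real n) = (if k \<le> q then 1 else 0)" if "q \<le> n" for q
    using t[rule_format, of "real q / real n"] that assms
    by (auto simp: divide_right_mono of_nat_diff)
  then show ?thesis by blast
qed

lemma grid_oplus:
  "1 \<le> n \<Longrightarrow> min 1 (real q / real n + real r / real n) = real (min n (q + r)) / real n"
  by (auto simp: field_simps min_def)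

lemma grid_odot:
  "1 \<le> n \<Longrightarrow> max 0 (real q / real n + real r / real n - 1) = real (q + r - n) / real n"
  by (auto simp: field_simps max_def of_nat_diff)

lemma grid_le_iff: "1 \<le> n \<Longrightarrow> real q / real n \<le> real r / real n \<longleftrightarrow> q \<le> r"
  by (auto simp: divide_right_mono field_simps)

lemma eq_if_same_lower_bounds: "(\<And>k. k \<le> x \<longleftrightarrow> k \<le> y) \<Longrightarrow> x = (y :: 'a :: order)"
  by (meson order_antisym order_refl)

locale PL_hsp =
  fixes n :: nat and I :: "'i set" and B :: "('i \<Rightarrow> real) set"
    and h :: "('i \<Rightarrow> real) \<Rightarrow> 'a" and A :: "'a pmv_alg"
  assumes n_pos: "1 \<le> n"
    and subuniverse_B: "subuniverse B (power_alg (PL n) I)"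
    and hom_h: "is_hom (subalg (power_alg (PL n) I) B) A h"
    and h_onto: "h ` B = pcar A"
begin

definition add_I :: "('i \<Rightarrow> real) \<Rightarrow> ('i \<Rightarrow> real) \<Rightarrow> 'i \<Rightarrow> real" where
  "add_I f g = restrict (\<lambda>i. min 1 (f i + g i)) I"

definition mul_I :: "('i \<Rightarrow> real) \<Rightarrow> ('i \<Rightarrow> real) \<Rightarrow> 'i \<Rightarrow> real" where
  "mul_I f g = restrict (\<lambda>i. max 0 (f i + g i - 1)) I"

definition zero_I :: "'i \<Rightarrow> real" where "zero_I = restrict (\<lambda>i. 0) I"

definition one_I :: "'i \<Rightarrow> real" where "one_I = restrict (\<lambda>i. 1) I"

lemma B_PiE: "b \<in> B \<Longrightarrow> b \<in> I \<rightarrow>\<^sub>E Ln n"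
  using subuniverse_B unfolding subuniverse_def power_alg_def PL_def by auto

lemma B_extensional: "b \<in> B \<Longrightarrow> b \<in> extensional I"
  using B_PiE by (simp add: PiE_iff)

lemma B_grid: "b \<in> B \<Longrightarrow> i \<in> I \<Longrightarrow> \<exists>q\<le>n. b i = real q / real n"
  using B_PiE[of b] unfolding Ln_def by (auto simp: PiE_iff)

lemma B_bounds: "b \<in> B \<Longrightarrow> i \<in> I \<Longrightarrow> 0 \<le> b i \<and> b i \<le> 1"
  using B_grid[of b i] n_pos by auto

lemma B_eqI: "f \<in> B \<Longrightarrow> g \<in> B \<Longrightarrow> (\<And>i. i \<in> I \<Longrightarrow> f i = g i) \<Longrightarrow> f = g"
  using B_extensional by (metis extensionalityI)

lemma B_leI:
  assumes "f \<in> B" "g \<in> B" "\<And>i. i \<in> I \<Longrightarrow> f i \<le> g i"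
  shows "f \<le> g"
proof (rule le_funI)
  fix x
  show "f x \<le> g x"
    using assms B_extensional[OF assms(1)] B_extensional[OF assms(2)]
    by (cases "x \<in> I") (auto simp: extensional_def)
qed

lemma power_ops_on_B:
  assumes "b \<in> B" "c \<in> B"
  shows "pmeet (power_alg (PL n) I) b c = inf b c"
    and "pjoin (power_alg (PL n) I) b c = sup b c"
    and "padd (power_alg (PL n) I) b c = add_I b c"
    and "pmul (power_alg (PL n) I) b c = mul_I b c"
  using B_extensional[OF assms(1)] B_extensional[OF assms(2)]
  by (auto simp: power_alg_def PL_def add_I_def mul_I_def restrict_def extensional_def
      fun_eq_iff inf_min sup_max)

lemma power_zero_one: "pzero (power_alg (PL n) I) = zero_I" "pone (power_alg (PL n) I) = one_I"
  by (auto simp: power_alg_def PL_def zero_I_def one_I_def)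

lemma B_closed:
  assumes "b \<in> B" "c \<in> B"
  shows "inf b c \<in> B" "sup b c \<in> B" "add_I b c \<in> B" "mul_I b c \<in> B"
  using subuniverse_B assms power_ops_on_B[OF assms] unfolding subuniverse_def by metis+

lemma B_zero_one: "zero_I \<in> B" "one_I \<in> B"
  using subuniverse_B power_zero_one unfolding subuniverse_def by metis+

lemma h_ops:
  assumes "b \<in> B" "c \<in> B"
  shows "h (inf b c) = pmeet A (h b) (h c)" "h (sup b c) = pjoin A (h b) (h c)"
    "h (add_I b c) = padd A (h b) (h c)" "h (mul_I b c) = pmul A (h b) (h c)"
proof -
  have "h (pmeet (power_alg (PL n) I) b c) = pmeet A (h b) (h c) \<and>
    h (pjoin (power_alg (PL n) I) b c) = pjoin A (h b) (h c) \<and>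
    h (padd (power_alg (PL n) I) b c) = padd A (h b) (h c) \<and>
    h (pmul (power_alg (PL n) I) b c) = pmul A (h b) (h c)"
    using hom_h assms unfolding is_hom_def subalg_def by simp
  then show "h (inf b c) = pmeet A (h b) (h c)" "h (sup b c) = pjoin A (h b) (h c)"
    "h (add_I b c) = padd A (h b) (h c)" "h (mul_I b c) = pmul A (h b) (h c)"
    unfolding power_ops_on_B[OF assms] by auto
qed

lemma h_zero_one: "h zero_I = pzero A" "h one_I = pone A"
proof -
  have "h (pzero (power_alg (PL n) I)) = pzero A \<and> h (pone (power_alg (PL n) I)) = pone A"
    using hom_h unfolding is_hom_def subalg_def by simp
  then show "h zero_I = pzero A" "h one_I = pone A" unfolding power_zero_one by auto
qed

lemma h_idem: "b \<in> B \<Longrightarrow> pmeet A (h b) (h b) = h b" "b \<in> B \<Longrightarrow> pjoin A (h b) (h b) = h b"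
  using h_ops(1,2)[of b b] by simp_all

lemma B_le_one: "b \<in> B \<Longrightarrow> b \<le> one_I"
  by (rule B_leI[OF _ B_zero_one(2)]) (auto simp: one_I_def dest: B_bounds)

lemma B_ge_zero: "b \<in> B \<Longrightarrow> zero_I \<le> b"
  by (rule B_leI[OF B_zero_one(1)]) (auto simp: zero_I_def dest: B_bounds)

definition term_fun :: "uterm \<Rightarrow> ('i \<Rightarrow> real) \<Rightarrow> 'i \<Rightarrow> real" where
  "term_fun t b = restrict (\<lambda>i. real_eval t (b i)) I"

lemma term_fun_in_B_hom: "b \<in> B \<Longrightarrow> term_fun t b \<in> B \<and> h (term_fun t b) = alg_eval A t (h b)"
proof (induction t arbitrary: b)
  case Var
  then have "term_fun Var b = b"
    using B_extensional[of b] by (auto simp: term_fun_def restrict_def extensional_def)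
  then show ?case using Var by simp
next
  case (Dbl t)
  have "term_fun (Dbl t) b = term_fun t (add_I b b)" by (auto simp: term_fun_def add_I_def)
  then show ?case using Dbl.IH B_closed(3) h_ops(3) Dbl.prems by simp
next
  case (Sqr t)
  have "term_fun (Sqr t) b = term_fun t (mul_I b b)" by (auto simp: term_fun_def mul_I_def)
  then show ?case using Sqr.IH B_closed(4) h_ops(4) Sqr.prems by simp
qed

definition thr :: "nat \<Rightarrow> real \<Rightarrow> real" where
  "thr k x = (if real k \<le> real n * x then 1 else 0)"

definition threshold :: "nat \<Rightarrow> ('i \<Rightarrow> real) \<Rightarrow> 'i \<Rightarrow> real" where
  "threshold k b = restrict (\<lambda>i. thr k (b i)) I"

lemma threshold_apply: "i \<in> I \<Longrightarrow> threshold k b i = thr k (b i)"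
  by (simp add: threshold_def)

lemma thr_grid: "thr k (real q / real n) = (if k \<le> q then 1 else 0)"
  using n_pos by (simp add: thr_def)

lemma thr_mono: "x \<le> y \<Longrightarrow> thr k x \<le> thr k y"
  using mult_left_mono[of x y "real n"] by (auto simp: thr_def)

lemma threshold_zero: "b \<in> B \<Longrightarrow> threshold 0 b = one_I"
  by (auto simp: threshold_def one_I_def thr_def dest: B_bounds intro!: restrict_ext)

lemma threshold_beyond:
  assumes "b \<in> B" "n < k"
  shows "threshold k b = zero_I"
proof -
  have "\<not> real k \<le> real n * b i" if "i \<in> I" for i
    using B_bounds[OF assms(1) that] mult_left_le[of "b i" "real n"] assms(2) by simp
  then show ?thesis by (auto simp: threshold_def zero_I_def thr_def intro!: restrict_ext)
qed

lemma threshold_term_fun: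
  assumes "1 \<le> k" "k \<le> n"
  obtains t where "\<And>b. b \<in> B \<Longrightarrow> threshold k b = term_fun t b"
proof -
  obtain t where t: "\<forall>q\<le>n. real_eval t (real q / real n) = (if k \<le> q then 1 else 0)"
    using uterm_grid_threshold[OF assms] by blast
  have "threshold k b = term_fun t b" if b: "b \<in> B" for b
    unfolding threshold_def term_fun_def
  proof (rule restrict_ext)
    fix i assume "i \<in> I"
    then obtain q where "q \<le> n" "b i = real q / real n" using B_grid[OF b] by blast
    then show "thr k (b i) = real_eval t (b i)" using t thr_grid by simp
  qed
  then show ?thesis using that by blast
qed

lemma threshold_in_B:
  assumes "b \<in> B"
  shows "threshold k b \<in> B"
proof (cases "1 \<le> k \<and> k \<le> n")
  case True
  then obtain t where "\<And>b. b \<in> B \<Longrightarrow> threshold k b = term_fun t b"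
    using threshold_term_fun by blast
  then show ?thesis using assms term_fun_in_B_hom by simp
next
  case False
  then have "k = 0 \<or> n < k" by auto
  then show ?thesis using assms threshold_zero threshold_beyond B_zero_one by auto
qed

lemma threshold_cong:
  assumes "b \<in> B" "c \<in> B" "h b = h c"
  shows "h (threshold k b) = h (threshold k c)"
proof (cases "1 \<le> k \<and> k \<le> n")
  case True
  then obtain t where "\<And>b. b \<in> B \<Longrightarrow> threshold k b = term_fun t b"
    using threshold_term_fun by blast
  then show ?thesis using assms term_fun_in_B_hom by simp
next
  case False
  then have "k = 0 \<or> n < k" by auto
  then show ?thesis using assms threshold_zero threshold_beyond by auto
qed

lemma threshold_inf:
  assumes "b \<in> B" "c \<in> B"
  shows "threshold k (inf b c) = inf (threshold k b) (threshold k c)"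
proof -
  have "thr k (min x y) = min (thr k x) (thr k y)" for x y
    by (metis min.absorb1 min.absorb2 thr_mono nle_le)
  then show ?thesis
    by (intro B_eqI) (auto simp: assms threshold_in_B B_closed threshold_apply inf_min)
qed

lemma threshold_sup:
  assumes "b \<in> B" "c \<in> B"
  shows "threshold k (sup b c) = sup (threshold k b) (threshold k c)"
proof -
  have "thr k (max x y) = max (thr k x) (thr k y)" for x y
    by (metis max.absorb1 max.absorb2 thr_mono nle_le)
  then show ?thesis
    by (intro B_eqI) (auto simp: assms threshold_in_B B_closed threshold_apply sup_max)
qed

lemma threshold_antimono: "b \<in> B \<Longrightarrow> k \<le> l \<Longrightarrow> threshold l b \<le> threshold k b"
  by (rule B_leI) (auto simp: threshold_in_B threshold_apply thr_def)

lemma threshold_add_I: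
  assumes b: "b \<in> B" and c: "c \<in> B"
  shows "inf (threshold i b) (threshold j c) \<le> threshold (min n (i + j)) (add_I b c)"
    and "threshold (i + j + 1) (add_I b c) \<le> sup (threshold (i + 1) b) (threshold (j + 1) c)"
proof -
  have "inf (threshold i b) (threshold j c) x \<le> threshold (min n (i + j)) (add_I b c) x \<and>
        threshold (i + j + 1) (add_I b c) x \<le> sup (threshold (i + 1) b) (threshold (j + 1) c) x"
    if x: "x \<in> I" for x
  proof -
    obtain q r where "q \<le> n" "b x = real q / real n" "r \<le> n" "c x = real r / real n"
      using B_grid[OF b x] B_grid[OF c x] by blast
    moreover from this have "add_I b c x = real (min n (q + r)) / real n"
      using x grid_oplus[OF n_pos] by (simp add: add_I_def)
    ultimately show ?thesis using x by (auto simp: threshold_apply thr_grid)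
  qed
  then show "inf (threshold i b) (threshold j c) \<le> threshold (min n (i + j)) (add_I b c)"
    and "threshold (i + j + 1) (add_I b c) \<le> sup (threshold (i + 1) b) (threshold (j + 1) c)"
    by (auto intro!: B_leI simp: b c threshold_in_B B_closed)
qed

lemma threshold_mul_I:
  assumes b: "b \<in> B" and c: "c \<in> B"
  shows "i \<le> n \<Longrightarrow> j \<le> n \<Longrightarrow>
      inf (threshold i b) (threshold j c) \<le> threshold (i + j - n) (mul_I b c)"
    and "threshold (i + j - n + 1) (mul_I b c) \<le> sup (threshold (i + 1) b) (threshold (j + 1) c)"
proof -
  have "(i \<le> n \<longrightarrow> j \<le> n \<longrightarrow>
          inf (threshold i b) (threshold j c) x \<le> threshold (i + j - n) (mul_I b c) x) \<and>
        threshold (i + j - n + 1) (mul_I b c) x \<le> sup (threshold (i + 1) b) (threshold (j + 1) c) x"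
    if x: "x \<in> I" for x
  proof -
    obtain q r where "q \<le> n" "b x = real q / real n" "r \<le> n" "c x = real r / real n"
      using B_grid[OF b x] B_grid[OF c x] by blast
    moreover from this have "mul_I b c x = real (q + r - n) / real n"
      using x grid_odot[OF n_pos] by (simp add: mul_I_def)
    ultimately show ?thesis using x by (auto simp: threshold_apply thr_grid)
  qed
  then show "i \<le> n \<Longrightarrow> j \<le> n \<Longrightarrow>
      inf (threshold i b) (threshold j c) \<le> threshold (i + j - n) (mul_I b c)"
    and "threshold (i + j - n + 1) (mul_I b c) \<le> sup (threshold (i + 1) b) (threshold (j + 1) c)"
    by (auto intro!: B_leI simp: b c threshold_in_B B_closed)
qed

lemma B_grid_le:
  assumes "u \<in> B" "v \<in> B" "u \<le> v" "i \<in> I"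
  obtains q r where "q \<le> r" "r \<le> n" "u i = real q / real n" "v i = real r / real n"
proof -
  obtain q r where "q \<le> n" "u i = real q / real n" "r \<le> n" "v i = real r / real n"
    using B_grid assms by meson
  moreover have "u i \<le> v i" using assms(3) by (simp add: le_fun_def)
  ultimately show ?thesis using that grid_le_iff[OF n_pos] by auto
qed

text \<open>\<open>descend u v j\<close> interpolates from \<open>v\<close> (at \<open>j = 0\<close>) to \<open>u\<close> (at \<open>j = n\<close>). Each step
  is expressible through a threshold of \<open>u\<close> (\<open>descend_Suc\<close>), while the same expression with
  the threshold of \<open>v\<close> changes nothing (\<open>descend_stable\<close>); so \<open>h\<close> cannot tell \<open>u\<close> from \<open>v\<close>
  once their thresholds have equal images.\<close>
definition descend :: "('i \<Rightarrow> real) \<Rightarrow> ('i \<Rightarrow> real) \<Rightarrow> nat \<Rightarrow> 'i \<Rightarrow> real" where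
  "descend u v j = restrict (\<lambda>i. if real j \<le> real n * u i then v i else u i) I"

context
  fixes u v assumes u: "u \<in> B" and v: "v \<in> B" and uv: "u \<le> v"
begin

lemma descend_zero: "descend u v 0 = v"
  using B_bounds[OF u] B_extensional[OF v]
  by (auto simp: descend_def restrict_def extensional_def fun_eq_iff)

lemma descend_n: "descend u v n = u"
proof -
  have "descend u v n i = u i" if i: "i \<in> I" for i
  proof -
    obtain q r where "q \<le> r" "r \<le> n" "u i = real q / real n" "v i = real r / real n"
      using B_grid_le[OF u v uv i] .
    then show ?thesis using i n_pos by (auto simp: descend_def)
  qed
  then show ?thesis
    using B_extensional[OF u] by (auto simp: descend_def extensional_def fun_eq_iff)
qed

lemma descend_Suc:
  assumes d: "descend u v j \<in> B"
  shows "descend u v (Suc j) = sup u (inf (descend u v j) (threshold (Suc j) u))"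
proof (rule extensionalityI[of _ I])
  show "descend u v (Suc j) \<in> extensional I" by (simp add: descend_def)
  show "sup u (inf (descend u v j) (threshold (Suc j) u)) \<in> extensional I"
    by (rule B_extensional) (simp add: u d B_closed threshold_in_B)
  fix i assume i: "i \<in> I"
  obtain q r where "q \<le> r" "r \<le> n" "u i = real q / real n" "v i = real r / real n"
    using B_grid_le[OF u v uv i] .
  then show "descend u v (Suc j) i = sup u (inf (descend u v j) (threshold (Suc j) u)) i"
    using i n_pos
    by (auto simp: descend_def threshold_apply thr_grid sup_max inf_min max_def grid_le_iff divide_le_0_iff)
qed

lemma descend_stable:
  assumes d: "descend u v j \<in> B"
  shows "descend u v j = sup u (inf (descend u v j) (threshold (Suc j) v))"
proof (rule B_eqI[OF d])
  show "sup u (inf (descend u v j) (threshold (Suc j) v)) \<in> B"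
    by (simp add: u v d B_closed threshold_in_B)
  fix i assume i: "i \<in> I"
  obtain q r where "q \<le> r" "r \<le> n" "u i = real q / real n" "v i = real r / real n"
    using B_grid_le[OF u v uv i] .
  moreover from this have "q = r \<or> q < r" by auto
  ultimately show "descend u v j i = sup u (inf (descend u v j) (threshold (Suc j) v)) i"
    using i n_pos
    by (auto simp: descend_def threshold_apply thr_grid sup_max inf_min max_def grid_le_iff divide_le_0_iff)
qed

lemma descend_in_B: "descend u v j \<in> B"
proof (induction j)
  case 0
  then show ?case by (simp add: descend_zero v)
next
  case (Suc j)
  then show ?case
    unfolding descend_Suc[OF Suc.IH] by (intro B_closed(1,2) u threshold_in_B)
qed

lemma h_eq_if_le_and_thresholds_eq:
  assumes thr_eq: "\<And>k. h (threshold k u) = h (threshold k v)"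
  shows "h u = h v"
proof -
  have "h (descend u v j) = h v" for j
  proof (induction j)
    case 0
    then show ?case by (simp add: descend_zero)
  next
    case (Suc j)
    let ?d = "descend u v j"
    have "h (descend u v (Suc j)) = pjoin A (h u) (pmeet A (h ?d) (h (threshold (Suc j) u)))"
      by (simp add: descend_Suc descend_in_B h_ops u B_closed threshold_in_B)
    also have "\<dots> = h (sup u (inf ?d (threshold (Suc j) v)))"
      by (simp add: thr_eq descend_in_B h_ops u v B_closed threshold_in_B)
    also have "\<dots> = h ?d" using descend_stable[OF descend_in_B] by simp
    finally show ?case using Suc.IH by simp
  qed
  from this[of n] show ?thesis by (simp add: descend_n)
qed

end

lemma h_eq_if_thresholds_eq:
  assumes b: "b \<in> B" and c: "c \<in> B"
    and thr_eq: "\<And>k. h (threshold k b) = h (threshold k c)"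
  shows "h b = h c"
proof -
  let ?u = "inf b c" and ?v = "sup b c"
  have uB: "?u \<in> B" and vB: "?v \<in> B" using B_closed b c by auto
  have "h (threshold k ?u) = h (threshold k ?v)" for k
    using h_ops[OF threshold_in_B[OF b] threshold_in_B[OF c]] thr_eq[of k]
    by (simp add: threshold_inf threshold_sup b c h_idem threshold_in_B)
  then have huv: "h ?u = h ?v"
    using h_eq_if_le_and_thresholds_eq[OF uB vB] by (simp add: le_supI1)
  have "h x = h ?u" if x: "x \<in> B" and "?u \<le> x" "x \<le> ?v" for x
  proof -
    have "h x = h (inf x ?v)" using that by (simp add: inf.absorb1)
    also have "\<dots> = h (inf x ?u)" using h_ops(1)[OF x vB] h_ops(1)[OF x uB] huv by simp
    also have "\<dots> = h ?u" using that by (simp add: inf.absorb2)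
    finally show ?thesis .
  qed
  then show ?thesis using b c by (simp add: le_supI1 le_supI2)
qed

definition sat_filter :: "('i \<Rightarrow> real) set \<Rightarrow> bool" where
  "sat_filter M \<longleftrightarrow> M \<subseteq> B \<and> (\<forall>x\<in>M. \<forall>y\<in>B. h y = h x \<longrightarrow> y \<in> M) \<and>
     (\<forall>x\<in>M. \<forall>y\<in>B. x \<le> y \<longrightarrow> y \<in> M) \<and> (\<forall>x\<in>M. \<forall>y\<in>M. inf x y \<in> M)"

lemma sat_filter_subset: "sat_filter M \<Longrightarrow> x \<in> M \<Longrightarrow> x \<in> B"
  unfolding sat_filter_def by blast

lemma sat_filter_h_cong: "sat_filter M \<Longrightarrow> x \<in> M \<Longrightarrow> y \<in> B \<Longrightarrow> h y = h x \<Longrightarrow> y \<in> M"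
  unfolding sat_filter_def by blast

lemma sat_filter_up: "sat_filter M \<Longrightarrow> x \<in> M \<Longrightarrow> y \<in> B \<Longrightarrow> x \<le> y \<Longrightarrow> y \<in> M"
  unfolding sat_filter_def by blast

lemma sat_filter_inf: "sat_filter M \<Longrightarrow> x \<in> M \<Longrightarrow> y \<in> M \<Longrightarrow> inf x y \<in> M"
  unfolding sat_filter_def by blast

text \<open>The saturated filter generated by an \<open>inf\<close>-closed \<open>S\<close> together with \<open>z\<close>.\<close>
definition adjoin :: "('i \<Rightarrow> real) set \<Rightarrow> ('i \<Rightarrow> real) \<Rightarrow> ('i \<Rightarrow> real) set" where
  "adjoin S z = {u \<in> B. \<exists>v\<in>S. \<exists>u'\<in>B. h u' = h u \<and> inf v z \<le> u'}"

lemma sat_filter_adjoin: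
  assumes S: "S \<subseteq> B" "\<forall>x\<in>S. \<forall>y\<in>S. inf x y \<in> S"
  shows "sat_filter (adjoin S z)"
  unfolding sat_filter_def
proof (intro conjI ballI impI)
  show "adjoin S z \<subseteq> B" unfolding adjoin_def by blast
next
  fix x y assume x: "x \<in> adjoin S z" and y: "y \<in> B" "h y = h x"
  from x obtain v u' where "v \<in> S" "u' \<in> B" "h u' = h x" "inf v z \<le> u'"
    unfolding adjoin_def by blast
  then show "y \<in> adjoin S z" unfolding adjoin_def using y by auto
next
  fix x y assume x: "x \<in> adjoin S z" and y: "y \<in> B" and xy: "x \<le> y"
  from x obtain v u' where v: "v \<in> S" "u' \<in> B" "h u' = h x" "inf v z \<le> u'" and xB: "x \<in> B"
    unfolding adjoin_def by blast
  have "h (sup u' y) = h (sup x y)" using h_ops(2) v(2,3) xB y by simp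
  also have "\<dots> = h y" using xy by (simp add: sup.absorb2)
  finally show "y \<in> adjoin S z"
    unfolding adjoin_def using y v(1,4) B_closed(2)[OF v(2) y] by (blast intro: le_supI1)
next
  fix x y assume x: "x \<in> adjoin S z" and y: "y \<in> adjoin S z"
  from x obtain v u where v: "v \<in> S" "u \<in> B" "h u = h x" "inf v z \<le> u" and xB: "x \<in> B"
    unfolding adjoin_def by blast
  from y obtain v' u' where v': "v' \<in> S" "u' \<in> B" "h u' = h y" "inf v' z \<le> u'" and yB: "y \<in> B"
    unfolding adjoin_def by blast
  have "h (inf u u') = h (inf x y)" using h_ops(1) v v' xB yB by simp
  moreover have "inf (inf v v') z \<le> inf u u'"
  proof (rule le_infI)
    show "inf (inf v v') z \<le> u" by (rule order_trans[OF inf_mono[OF inf_le1 order_refl] v(4)])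
    show "inf (inf v v') z \<le> u'" by (rule order_trans[OF inf_mono[OF inf_le2 order_refl] v'(4)])
  qed
  ultimately show "inf x y \<in> adjoin S z"
    unfolding adjoin_def using S(2) v(1,2) v'(1,2) B_closed(1) xB yB by blast
qed

lemma sat_filter_Union_chain:
  assumes "C \<noteq> {}" "subset.chain {M. sat_filter M} C"
  shows "sat_filter (\<Union>C)"
proof -
  have sat: "\<And>X. X \<in> C \<Longrightarrow> sat_filter X"
    and total: "\<And>X Y. X \<in> C \<Longrightarrow> Y \<in> C \<Longrightarrow> X \<subseteq> Y \<or> Y \<subseteq> X"
    using assms(2) by (auto simp: subset_chain_def)
  have "inf x y \<in> \<Union>C" if xy: "x \<in> \<Union>C" "y \<in> \<Union>C" for x y
  proof -
    obtain X Y where XY: "X \<in> C" "Y \<in> C" "x \<in> X" "y \<in> Y" using xy by blast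
    then consider "X \<subseteq> Y" | "Y \<subseteq> X" using total by blast
    then show ?thesis
      by cases (use XY sat sat_filter_inf in blast)+
  qed
  moreover have "\<Union>C \<subseteq> B" using sat sat_filter_subset by blast
  moreover have "y \<in> \<Union>C" if "x \<in> \<Union>C" "y \<in> B" "h y = h x \<or> x \<le> y" for x y
    using that sat sat_filter_h_cong sat_filter_up by blast
  ultimately show ?thesis unfolding sat_filter_def by blast
qed

text \<open>A maximal saturated filter avoiding \<open>c\<close> is prime: if neither \<open>x\<close> nor \<open>y\<close> were in it,
  adjoining either one would reach \<open>c\<close>, and distributivity then puts \<open>c\<close> below
  \<open>v \<sqinter> (x \<squnion> y)\<close> modulo the kernel of \<open>h\<close>.\<close>
lemma maximal_sat_filter_prime:
  assumes M: "sat_filter M" and c: "c \<in> B" "c \<notin> M"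
    and maximal: "\<And>X. sat_filter X \<Longrightarrow> M \<subseteq> X \<Longrightarrow> c \<notin> X \<Longrightarrow> X = M"
    and xy: "x \<in> B" "y \<in> B" "sup x y \<in> M"
  shows "x \<in> M \<or> y \<in> M"
proof -
  have MB: "M \<subseteq> B" using M sat_filter_subset by blast
  have reach: "\<exists>v\<in>M. \<exists>u\<in>B. h u = h c \<and> inf v z \<le> u" if z: "z \<in> B" "z \<notin> M" for z
  proof -
    have "sat_filter (adjoin M z)"
      using sat_filter_adjoin[OF MB] sat_filter_inf[OF M] by blast
    moreover have "M \<subseteq> adjoin M z"
      unfolding adjoin_def using MB inf_le1 by blast
    moreover have "z \<in> adjoin M z"
      unfolding adjoin_def using z xy(3) inf_le2 by blast
    ultimately have "c \<in> adjoin M z" using maximal z(2) by blast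
    then show ?thesis unfolding adjoin_def by auto
  qed
  show ?thesis
  proof (rule ccontr)
    assume "\<not> (x \<in> M \<or> y \<in> M)"
    then obtain v1 u1 v2 u2 where
      1: "v1 \<in> M" "u1 \<in> B" "h u1 = h c" "inf v1 x \<le> u1" and
      2: "v2 \<in> M" "u2 \<in> B" "h u2 = h c" "inf v2 y \<le> u2"
      using reach[OF xy(1)] reach[OF xy(2)] by blast
    let ?v = "inf v1 v2"
    have "inf ?v (sup x y) \<in> M" using sat_filter_inf[OF M] 1(1) 2(1) xy(3) by blast
    moreover have "inf ?v (sup x y) = sup (inf ?v x) (inf ?v y)" by (rule inf_sup_distrib1)
    moreover have "\<dots> \<le> sup u1 u2"
    proof (rule sup_mono)
      show "inf ?v x \<le> u1" by (rule order_trans[OF inf_mono[OF inf_le1 order_refl] 1(4)])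
      show "inf ?v y \<le> u2" by (rule order_trans[OF inf_mono[OF inf_le2 order_refl] 2(4)])
    qed
    ultimately have "sup u1 u2 \<in> M"
      using sat_filter_up[OF M _ B_closed(2)[OF 1(2) 2(2)]] by simp
    moreover have "h c = h (sup u1 u2)" using h_ops(2) 1(2,3) 2(2,3) h_idem(2) c(1) by simp
    ultimately show False using sat_filter_h_cong[OF M _ c(1)] c(2) by blast
  qed
qed

definition prime_sat_filter :: "('i \<Rightarrow> real) set \<Rightarrow> bool" where
  "prime_sat_filter M \<longleftrightarrow> sat_filter M \<and> one_I \<in> M \<and> zero_I \<notin> M \<and>
     (\<forall>x\<in>B. \<forall>y\<in>B. sup x y \<in> M \<longrightarrow> x \<in> M \<or> y \<in> M)"

lemma adjoin_one_separates:
  assumes b: "b \<in> B" and c: "c \<in> B" and bc: "h (sup b c) \<noteq> h c"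
  shows "sat_filter (adjoin {one_I} b)" "b \<in> adjoin {one_I} b" "c \<notin> adjoin {one_I} b"
proof -
  show "sat_filter (adjoin {one_I} b)" using sat_filter_adjoin B_zero_one(2) by simp
  show "b \<in> adjoin {one_I} b"
    unfolding adjoin_def using b B_le_one[OF b] by (auto simp: inf.absorb2)
  show "c \<notin> adjoin {one_I} b"
  proof
    assume "c \<in> adjoin {one_I} b"
    then obtain u where u: "u \<in> B" "h u = h c" "b \<le> u"
      unfolding adjoin_def using B_le_one[OF b] by (auto simp: inf.absorb2)
    have "h (sup b c) = h (sup b u)" using h_ops(2) b c u(1,2) by simp
    also have "\<dots> = h c" using u by (simp add: sup.absorb2)
    finally show False using bc by simp
  qed
qed

lemma prime_sat_filter_exists:
  assumes b: "b \<in> B" and c: "c \<in> B" and bc: "h (sup b c) \<noteq> h c"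
  obtains M where "prime_sat_filter M" "b \<in> M" "c \<notin> M"
proof -
  define F where "F = {M. sat_filter M \<and> b \<in> M \<and> c \<notin> M}"
  have "adjoin {one_I} b \<in> F"
    using adjoin_one_separates[OF assms] unfolding F_def by blast
  moreover have "\<Union>C \<in> F" if "C \<noteq> {}" "subset.chain F C" for C
  proof -
    have "subset.chain {M. sat_filter M} C"
      using that(2) unfolding F_def subset_chain_def by blast
    then show ?thesis
      using sat_filter_Union_chain that unfolding F_def subset_chain_def by blast
  qed
  ultimately obtain M where MF: "M \<in> F" and max: "\<And>X. X \<in> F \<Longrightarrow> M \<subseteq> X \<Longrightarrow> X = M"
    using subset_Zorn_nonempty[of F] by blast
  then have M: "sat_filter M" "b \<in> M" "c \<notin> M" unfolding F_def by auto
  have "one_I \<in> M" using sat_filter_up[OF M(1,2)] B_zero_one(2) B_le_one[OF b] by blast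
  moreover have "zero_I \<notin> M" using sat_filter_up[OF M(1) _ c] B_ge_zero[OF c] M(3) by blast
  moreover have "x \<in> M \<or> y \<in> M" if "x \<in> B" "y \<in> B" "sup x y \<in> M" for x y
    using maximal_sat_filter_prime[OF M(1) c M(3) _ that] max M(2) unfolding F_def by blast
  ultimately show ?thesis using that M unfolding prime_sat_filter_def by blast
qed

definition level :: "('i \<Rightarrow> real) set \<Rightarrow> ('i \<Rightarrow> real) \<Rightarrow> nat" where
  "level M b = Max {k. k \<le> n \<and> threshold k b \<in> M}"

context
  fixes M assumes M: "prime_sat_filter M"
begin

lemma M_sat_filter: "sat_filter M"
  and M_prime: "\<And>x y. x \<in> B \<Longrightarrow> y \<in> B \<Longrightarrow> sup x y \<in> M \<Longrightarrow> x \<in> M \<or> y \<in> M"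
  using M unfolding prime_sat_filter_def by auto

lemma threshold_in_M_iff:
  assumes b: "b \<in> B"
  shows "threshold k b \<in> M \<longleftrightarrow> k \<le> level M b"
proof -
  have oM: "one_I \<in> M" and zM: "zero_I \<notin> M" using M unfolding prime_sat_filter_def by auto
  define K where "K = {k. k \<le> n \<and> threshold k b \<in> M}"
  have fin: "finite K" unfolding K_def by (rule finite_subset[of _ "{..n}"]) auto
  have "0 \<in> K" unfolding K_def using threshold_zero[OF b] oM by simp
  then have "level M b \<in> K" unfolding level_def K_def[symmetric] using Max_in[OF fin] by blast
  then have top: "threshold (level M b) b \<in> M" unfolding K_def by simp
  show ?thesis
  proof
    assume kM: "threshold k b \<in> M"
    then have "k \<le> n" using threshold_beyond[OF b] zM by (metis not_le)
    then show "k \<le> level M b"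
      unfolding level_def K_def[symmetric] using fin kM by (simp add: K_def)
  next
    assume "k \<le> level M b"
    then show "threshold k b \<in> M"
      using sat_filter_up[OF M_sat_filter top threshold_in_B[OF b]] threshold_antimono[OF b] by blast
  qed
qed

lemma level_le:
  assumes b: "b \<in> B"
  shows "level M b \<le> n"
proof (rule ccontr)
  assume "\<not> level M b \<le> n"
  then have "threshold (level M b) b = zero_I" using threshold_beyond[OF b] by simp
  moreover have "threshold (level M b) b \<in> M" using threshold_in_M_iff[OF b] by simp
  ultimately show False using M unfolding prime_sat_filter_def by simp
qed

lemma level_h_cong:
  assumes b: "b \<in> B" and c: "c \<in> B" and bc: "h b = h c"
  shows "level M b = level M c"
proof (rule eq_if_same_lower_bounds)
  fix k
  have "threshold k b \<in> M \<longleftrightarrow> threshold k c \<in> M"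
    using threshold_cong[OF b c bc, of k] sat_filter_h_cong[OF M_sat_filter]
      threshold_in_B[OF b] threshold_in_B[OF c] by auto
  then show "k \<le> level M b \<longleftrightarrow> k \<le> level M c" by (simp add: threshold_in_M_iff b c)
qed

lemma level_inf:
  assumes b: "b \<in> B" and c: "c \<in> B"
  shows "level M (inf b c) = min (level M b) (level M c)"
proof (rule eq_if_same_lower_bounds)
  fix k
  have "threshold k (inf b c) \<in> M \<longleftrightarrow> threshold k b \<in> M \<and> threshold k c \<in> M"
    unfolding threshold_inf[OF b c]
    using sat_filter_inf[OF M_sat_filter]
      sat_filter_up[OF M_sat_filter _ threshold_in_B[OF b] inf_le1]
      sat_filter_up[OF M_sat_filter _ threshold_in_B[OF c] inf_le2] by blast
  then show "k \<le> level M (inf b c) \<longleftrightarrow> k \<le> min (level M b) (level M c)"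
    by (simp add: threshold_in_M_iff b c B_closed)
qed

lemma level_sup:
  assumes b: "b \<in> B" and c: "c \<in> B"
  shows "level M (sup b c) = max (level M b) (level M c)"
proof (rule eq_if_same_lower_bounds)
  fix k
  have "threshold k (sup b c) \<in> M \<longleftrightarrow> threshold k b \<in> M \<or> threshold k c \<in> M"
    unfolding threshold_sup[OF b c]
    using M_prime[OF threshold_in_B[OF b] threshold_in_B[OF c]]
      sat_filter_up[OF M_sat_filter _ B_closed(2)[OF threshold_in_B[OF b] threshold_in_B[OF c]]]
    by (meson sup_ge1 sup_ge2)
  then show "k \<le> level M (sup b c) \<longleftrightarrow> k \<le> max (level M b) (level M c)"
    by (auto simp: threshold_in_M_iff b c B_closed)
qed

lemma level_add:
  assumes b: "b \<in> B" and c: "c \<in> B"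
  shows "level M (add_I b c) = min n (level M b + level M c)"
proof -
  let ?i = "level M b" and ?j = "level M c"
  have bc: "add_I b c \<in> B" using B_closed(3)[OF b c] .
  have "inf (threshold ?i b) (threshold ?j c) \<in> M"
    using sat_filter_inf[OF M_sat_filter] threshold_in_M_iff[OF b] threshold_in_M_iff[OF c] by blast
  then have "threshold (min n (?i + ?j)) (add_I b c) \<in> M"
    using sat_filter_up[OF M_sat_filter _ threshold_in_B[OF bc] threshold_add_I(1)[OF b c]] by blast
  then have lower: "min n (?i + ?j) \<le> level M (add_I b c)" by (simp add: threshold_in_M_iff bc)
  have "\<not> threshold (?i + ?j + 1) (add_I b c) \<in> M"
  proof
    assume "threshold (?i + ?j + 1) (add_I b c) \<in> M"
    then have "sup (threshold (?i + 1) b) (threshold (?j + 1) c) \<in> M"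
      using sat_filter_up[OF M_sat_filter _
          B_closed(2)[OF threshold_in_B[OF b] threshold_in_B[OF c]] threshold_add_I(2)[OF b c]]
      by blast
    then have "?i + 1 \<le> ?i \<or> ?j + 1 \<le> ?j"
      using M_prime[OF threshold_in_B[OF b] threshold_in_B[OF c]]
        threshold_in_M_iff[OF b] threshold_in_M_iff[OF c] by blast
    then show False by simp
  qed
  then have "level M (add_I b c) \<le> ?i + ?j" by (simp add: threshold_in_M_iff bc)
  then show ?thesis using lower level_le[OF bc] by linarith
qed

lemma level_mul:
  assumes b: "b \<in> B" and c: "c \<in> B"
  shows "level M (mul_I b c) = level M b + level M c - n"
proof -
  let ?i = "level M b" and ?j = "level M c"
  have bc: "mul_I b c \<in> B" using B_closed(4)[OF b c] .
  have "inf (threshold ?i b) (threshold ?j c) \<in> M"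
    using sat_filter_inf[OF M_sat_filter] threshold_in_M_iff[OF b] threshold_in_M_iff[OF c] by blast
  then have "threshold (?i + ?j - n) (mul_I b c) \<in> M"
    using sat_filter_up[OF M_sat_filter _ threshold_in_B[OF bc]]
      threshold_mul_I(1)[OF b c level_le[OF b] level_le[OF c]] by blast
  then have lower: "?i + ?j - n \<le> level M (mul_I b c)" by (simp add: threshold_in_M_iff bc)
  have "\<not> threshold (?i + ?j - n + 1) (mul_I b c) \<in> M"
  proof
    assume "threshold (?i + ?j - n + 1) (mul_I b c) \<in> M"
    then have "sup (threshold (?i + 1) b) (threshold (?j + 1) c) \<in> M"
      using sat_filter_up[OF M_sat_filter _
          B_closed(2)[OF threshold_in_B[OF b] threshold_in_B[OF c]] threshold_mul_I(2)[OF b c]]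
      by blast
    then have "?i + 1 \<le> ?i \<or> ?j + 1 \<le> ?j"
      using M_prime[OF threshold_in_B[OF b] threshold_in_B[OF c]]
        threshold_in_M_iff[OF b] threshold_in_M_iff[OF c] by blast
    then show False by simp
  qed
  then have "level M (mul_I b c) \<le> ?i + ?j - n" by (simp add: threshold_in_M_iff bc)
  then show ?thesis using lower by linarith
qed

lemma level_zero: "level M zero_I = 0"
proof -
  have "threshold 1 zero_I = zero_I"
    by (rule B_eqI[OF threshold_in_B[OF B_zero_one(1)] B_zero_one(1)])
      (simp add: threshold_apply thr_def zero_I_def)
  then show ?thesis
    using threshold_in_M_iff[OF B_zero_one(1), of 1] M unfolding prime_sat_filter_def by auto
qed

lemma level_one: "level M one_I = n"
proof -
  have "threshold n one_I = one_I"
    by (rule B_eqI[OF threshold_in_B[OF B_zero_one(2)] B_zero_one(2)])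
      (simp add: threshold_apply thr_def one_I_def)
  then show ?thesis
    using threshold_in_M_iff[OF B_zero_one(2), of n] level_le[OF B_zero_one(2)] M
    unfolding prime_sat_filter_def by auto
qed

definition level_hom :: "'a \<Rightarrow> real" where
  "level_hom a = real (level M (SOME b. b \<in> B \<and> h b = a)) / real n"

lemma level_hom_h:
  assumes b: "b \<in> B"
  shows "level_hom (h b) = real (level M b) / real n"
proof -
  let ?b = "SOME b'. b' \<in> B \<and> h b' = h b"
  have "?b \<in> B \<and> h ?b = h b" by (rule someI[of _ b]) (simp add: b)
  then have "level M ?b = level M b" using level_h_cong b by blast
  then show ?thesis by (simp add: level_hom_def)
qed

lemma is_hom_level_hom: "is_hom A (PL n) level_hom"
  unfolding is_hom_def
proof (intro conjI ballI)
  fix x assume "x \<in> pcar A"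
  then obtain b where "b \<in> B" "x = h b" using h_onto by blast
  then show "level_hom x \<in> pcar (PL n)"
    using level_hom_h level_le unfolding PL_def Ln_def by auto
next
  show "level_hom (pzero A) = pzero (PL n)" "level_hom (pone A) = pone (PL n)"
    using level_hom_h[OF B_zero_one(1)] level_hom_h[OF B_zero_one(2)] level_zero level_one
      h_zero_one n_pos by (simp_all add: PL_def)
next
  fix x y assume "x \<in> pcar A" "y \<in> pcar A"
  then obtain b c where b: "b \<in> B" and x: "x = h b" and c: "c \<in> B" and y: "y = h c"
    using h_onto by blast
  let ?p = "level M b" and ?q = "level M c"
  have "level_hom (pmeet A x y) = real (min ?p ?q) / real n"
    unfolding x y h_ops(1)[OF b c, symmetric] level_hom_h[OF B_closed(1)[OF b c]] level_inf[OF b c] ..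
  also have "\<dots> = min (real ?p / real n) (real ?q / real n)"
    using grid_le_iff[OF n_pos, of ?p ?q] by (auto simp: min_def)
  finally show "level_hom (pmeet A x y) = pmeet (PL n) (level_hom x) (level_hom y)"
    by (simp add: PL_def x y level_hom_h b c)
  have "level_hom (pjoin A x y) = real (max ?p ?q) / real n"
    unfolding x y h_ops(2)[OF b c, symmetric] level_hom_h[OF B_closed(2)[OF b c]] level_sup[OF b c] ..
  also have "\<dots> = max (real ?p / real n) (real ?q / real n)"
    using grid_le_iff[OF n_pos, of ?p ?q] by (auto simp: max_def)
  finally show "level_hom (pjoin A x y) = pjoin (PL n) (level_hom x) (level_hom y)"
    by (simp add: PL_def x y level_hom_h b c)
  have "level_hom (padd A x y) = real (min n (?p + ?q)) / real n"
    unfolding x y h_ops(3)[OF b c, symmetric] level_hom_h[OF B_closed(3)[OF b c]] level_add[OF b c] ..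
  then show "level_hom (padd A x y) = padd (PL n) (level_hom x) (level_hom y)"
    by (simp add: PL_def x y level_hom_h b c grid_oplus[OF n_pos])
  have "level_hom (pmul A x y) = real (?p + ?q - n) / real n"
    unfolding x y h_ops(4)[OF b c, symmetric] level_hom_h[OF B_closed(4)[OF b c]] level_mul[OF b c] ..
  then show "level_hom (pmul A x y) = pmul (PL n) (level_hom x) (level_hom y)"
    by (simp add: PL_def x y level_hom_h b c grid_odot[OF n_pos])
qed

end

lemma separating_prime_sat_filter:
  assumes b: "b \<in> B" and c: "c \<in> B" and bc: "h b \<noteq> h c"
  obtains M where "prime_sat_filter M" "level M b \<noteq> level M c"
proof -
  obtain k where k: "h (threshold k b) \<noteq> h (threshold k c)"
    using h_eq_if_thresholds_eq[OF b c] bc by blast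
  let ?b = "threshold k b" and ?c = "threshold k c"
  have bB: "?b \<in> B" and cB: "?c \<in> B" using threshold_in_B b c by auto
  have "h (sup ?b ?c) \<noteq> h ?c \<or> h (sup ?c ?b) \<noteq> h ?b"
    using k by (metis sup_commute)
  then obtain M where M: "prime_sat_filter M" "?b \<in> M \<longleftrightarrow> ?c \<notin> M"
    using prime_sat_filter_exists[OF bB cB] prime_sat_filter_exists[OF cB bB] by metis
  then have "level M b \<noteq> level M c"
    using threshold_in_M_iff[OF M(1) b, of k] threshold_in_M_iff[OF M(1) c, of k] by auto
  then show ?thesis using that M(1) by blast
qed

lemma homs_separate:
  assumes "x \<in> pcar A" "y \<in> pcar A" "x \<noteq> y"
  shows "\<exists>g. is_hom A (PL n) g \<and> g x \<noteq> g y"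
proof -
  obtain b c where b: "b \<in> B" "x = h b" and c: "c \<in> B" "y = h c"
    using assms h_onto by blast
  then obtain M where M: "prime_sat_filter M" "level M b \<noteq> level M c"
    using separating_prime_sat_filter assms(3) by blast
  then have "level_hom M x \<noteq> level_hom M y" using b c level_hom_h n_pos by simp
  then show ?thesis using is_hom_level_hom[OF M(1)] by blast
qed

end

lemma embedding_into_power_of_homs:
  fixes A :: "'a pmv_alg" and C :: "'c pmv_alg"
  assumes separate: "\<And>x y. x \<in> pcar A \<Longrightarrow> y \<in> pcar A \<Longrightarrow> x \<noteq> y \<Longrightarrow>
                        \<exists>g. is_hom A C g \<and> g x \<noteq> g y"
  defines "J \<equiv> {g. is_hom A C g}"
  shows "is_hom A (power_alg C J) (\<lambda>x. \<lambda>g\<in>J. g x)" and "inj_on (\<lambda>x. \<lambda>g\<in>J. g x) (pcar A)"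
proof -
  show "is_hom A (power_alg C J) (\<lambda>x. \<lambda>g\<in>J. g x)"
    unfolding is_hom_def power_alg_def
    by (auto simp: J_def is_hom_def intro!: restrict_ext)
  show "inj_on (\<lambda>x. \<lambda>g\<in>J. g x) (pcar A)"
  proof (rule inj_onI, rule ccontr)
    fix x y assume "x \<in> pcar A" "y \<in> pcar A" "(\<lambda>g\<in>J. g x) = (\<lambda>g\<in>J. g y)" "x \<noteq> y"
    then show False using separate unfolding J_def by (metis mem_Collect_eq restrict_apply)
  qed
qed

theorem corollary3p6:
  fixes n :: nat and I :: "'i set" and B :: "('i \<Rightarrow> real) set"
    and h :: "('i \<Rightarrow> real) \<Rightarrow> 'a" and A :: "'a pmv_alg"
  assumes "n \<ge> 1"
    and "HSP_witness n I B h A"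
  shows "in_ISP_PL n A"
proof -
  interpret PL_hsp n I B h A
    using assms unfolding HSP_witness_def by unfold_locales auto
  show ?thesis
    unfolding in_ISP_PL_def using embedding_into_power_of_homs[OF homs_separate] by blast
qed

end
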